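(* Let $\Phi,\Psi$ be Young functions satisfying $\Delta_2$ such that $\Phi\in\Delta'$ and $\tilde\Psi\in\Delta'$. Then there exists $C=C(\Phi,\Psi)>0$ such that \[ \Psi\circ\Phi^{-1}(s)\,\Psi\circ\Phi^{-1}(t)\le C\,\Psi\circ\Phi^{-1}(st)\qquad\forall\,s,t\ge0. \]
   Context: A Young function is $\Phi(t)=\int_0^t\varphi(s)\,ds$ with $\varphi$ increasing, right continuous, $\varphi(t)=0$ iff $t=0$; $\tilde\Psi(t)=\sup_{s>0}\{st-\Psi(s)\}$ is the complementary function. $\Delta_2$: $\Phi(2t)\le C\Phi(t)$ for all $t\ge0$; $\Delta'$: $\Phi(st)\le C\Phi(s)\Phi(t)$ for all $s,t\ge0$ (some $C>1$). *)

theory Defs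
  imports "HOL-Analysis.Analysis"
begin

definition young_function :: "(real \<Rightarrow> real) \<Rightarrow> bool" where
  "young_function \<Phi> \<longleftrightarrow> (\<exists>\<phi>::real \<Rightarrow> real.
      mono_on {0..} \<phi> \<and>
      (\<forall>t\<ge>0. continuous (at_right t) \<phi>) \<and>
      (\<forall>t\<ge>0. \<phi> t = 0 \<longleftrightarrow> t = 0) \<and>
      (\<forall>t\<ge>0. \<Phi> t = integral {0..t} \<phi>))"

definition young_conj :: "(real \<Rightarrow> real) \<Rightarrow> real \<Rightarrow> real" where
  "young_conj \<Psi> t = Sup {s * t - \<Psi> s | s. s > 0}"

definition young_conj_finite :: "(real \<Rightarrow> real) \<Rightarrow> bool" where
  "young_conj_finite \<Psi> \<longleftrightarrow> (\<forall>t\<ge>0. bdd_above {s * t - \<Psi> s | s. s > 0})"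

definition Delta2 :: "(real \<Rightarrow> real) \<Rightarrow> bool" where
  "Delta2 \<Phi> \<longleftrightarrow> (\<exists>C. \<forall>t\<ge>0. \<Phi> (2 * t) \<le> C * \<Phi> t)"

definition Delta' :: "(real \<Rightarrow> real) \<Rightarrow> bool" where
  "Delta' \<Phi> \<longleftrightarrow> (\<exists>C>1. \<forall>s\<ge>0. \<forall>t\<ge>0. \<Phi> (s * t) \<le> C * \<Phi> s * \<Phi> t)"

definition young_inv :: "(real \<Rightarrow> real) \<Rightarrow> real \<Rightarrow> real" where
  "young_inv \<Phi> = the_inv_into {0..} \<Phi>"

end

theory Submission
  imports Defs
begin

text \<open>Since \<open>\<Phi> \<in> \<Delta>'\<close>, the inverse satisfies \<open>\<Phi>\<inverse>(s) \<Phi>\<inverse>(t) \<le> C \<Phi>\<inverse>(s t)\<close>. With \<open>\<psi> = \<Psi>'\<close>,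
  Young's inequality \<open>a b \<le> \<Psi>(a) + \<tilde>\<Psi>(b)\<close> is sharp up to a factor at \<open>b = \<psi>(a)\<close>, since
  \<open>\<Psi>(a) \<le> a \<psi>(a)\<close> and \<open>0 \<le> \<tilde>\<Psi>(\<psi>(a)) \<le> a \<psi>(a)\<close>; this turns \<open>\<tilde>\<Psi> \<in> \<Delta>'\<close> into the dual condition
  \<open>\<Psi>(a) \<Psi>(b) \<le> \<Psi>(K a b)\<close>. Chaining the two and absorbing the constant \<open>K C\<close> into \<open>\<Psi>\<close> by
  \<open>\<Delta>\<^sub>2\<close> gives the claim.\<close>

definition young_density :: "(real \<Rightarrow> real) \<Rightarrow> (real \<Rightarrow> real) \<Rightarrow> bool" where
  "young_density \<Phi> \<phi> \<longleftrightarrow> mono_on {0..} \<phi> \<and> (\<forall>t\<ge>0. \<phi> t = 0 \<longleftrightarrow> t = 0) \<and>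
     (\<forall>t\<ge>0. \<Phi> t = integral {0..t} \<phi>)"

definition Nabla' :: "(real \<Rightarrow> real) \<Rightarrow> bool" where
  "Nabla' \<Psi> \<longleftrightarrow> (\<exists>K>0. \<forall>a\<ge>0. \<forall>b\<ge>0. \<Psi> a * \<Psi> b \<le> \<Psi> (K * a * b))"

lemma young_function_imp_density:
  assumes "young_function \<Phi>"
  obtains \<phi> where "young_density \<Phi> \<phi>"
  using assms unfolding young_function_def young_density_def by blast

lemma young_density_mono:
  assumes "young_density \<Phi> \<phi>" "0 \<le> s" "s \<le> t"
  shows "\<phi> s \<le> \<phi> t"
  using assms mono_onD[of "{0..}" \<phi> s t] unfolding young_density_def by simp

lemma young_density_nonneg:
  assumes "young_density \<Phi> \<phi>" "t \<ge> 0"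
  shows "\<phi> t \<ge> 0"
  using assms mono_onD[of "{0..}" \<phi> 0 t] unfolding young_density_def by auto

lemma young_density_pos:
  assumes "young_density \<Phi> \<phi>" "t > 0"
  shows "\<phi> t > 0"
  using assms young_density_nonneg[OF assms(1), of t] unfolding young_density_def
  by (metis less_eq_real_def order.strict_iff_not)

lemma young_density_zero:
  assumes "young_density \<Phi> \<phi>"
  shows "\<Phi> 0 = 0"
  using assms unfolding young_density_def by auto

lemma young_density_integrable:
  assumes "young_density \<Phi> \<phi>" "0 \<le> a"
  shows "\<phi> integrable_on {a..b}"
  using assms unfolding young_density_def
  by (intro integrable_on_mono_on) (auto intro: mono_on_subset)

lemma young_density_increment:
  assumes "young_density \<Phi> \<phi>" "0 \<le> a" "a \<le> b"
  shows "\<Phi> b - \<Phi> a = integral {a..b} \<phi>"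
  using Henstock_Kurzweil_Integration.integral_combine[OF assms(2,3) young_density_integrable[OF assms(1) order_refl, of b]] assms
  unfolding young_density_def by auto

lemma young_density_increment_lower:
  assumes "young_density \<Phi> \<phi>" "0 \<le> a" "a \<le> b"
  shows "(b - a) * \<phi> a \<le> \<Phi> b - \<Phi> a"
proof -
  have "integral {a..b} (\<lambda>_. \<phi> a) \<le> integral {a..b} \<phi>"
    using assms young_density_integrable[OF assms(1,2)] unfolding young_density_def
    by (intro integral_le) (auto intro: mono_onD)
  then show ?thesis
    using young_density_increment[OF assms] assms(3) by simp
qed

lemma young_density_increment_upper:
  assumes "young_density \<Phi> \<phi>" "0 \<le> a" "a \<le> b"
  shows "\<Phi> b - \<Phi> a \<le> (b - a) * \<phi> b"
proof -
  have "integral {a..b} \<phi> \<le> integral {a..b} (\<lambda>_. \<phi> b)"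
    using assms young_density_integrable[OF assms(1,2)] unfolding young_density_def
    by (intro integral_le) (auto intro: mono_onD)
  then show ?thesis
    using young_density_increment[OF assms] assms(3) by simp
qed

lemma young_density_le_mult:
  assumes "young_density \<Phi> \<phi>" "0 \<le> a"
  shows "\<Phi> a \<le> a * \<phi> a"
  using young_density_increment_upper[OF assms(1) order_refl assms(2)] young_density_zero[OF assms(1)]
  by simp

lemma young_density_continuous_on:
  assumes "young_density \<Phi> \<phi>"
  shows "continuous_on {0..b} \<Phi>"
proof -
  have "continuous_on {0..b} (\<lambda>x. integral {0..x} \<phi>)"
    by (intro indefinite_integral_continuous_1 young_density_integrable[OF assms]) simp
  then show ?thesis
    using assms unfolding young_density_def by (auto intro: continuous_on_cong[THEN iffD1])
qed

lemma young_function_zero: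
  assumes "young_function \<Phi>"
  shows "\<Phi> 0 = 0"
  using assms young_density_zero young_function_imp_density by metis

lemma young_function_mono:
  assumes "young_function \<Phi>" "0 \<le> a" "a \<le> b"
  shows "\<Phi> a \<le> \<Phi> b"
proof -
  obtain \<phi> where \<phi>: "young_density \<Phi> \<phi>"
    using young_function_imp_density[OF assms(1)] .
  have "0 \<le> (b - a) * \<phi> a"
    using young_density_nonneg[OF \<phi> assms(2)] assms(3) by simp
  then show ?thesis
    using young_density_increment_lower[OF \<phi> assms(2,3)] by simp
qed

lemma young_function_strict_mono:
  assumes "young_function \<Phi>" "0 \<le> a" "a < b"
  shows "\<Phi> a < \<Phi> b"
proof -
  obtain \<phi> where \<phi>: "young_density \<Phi> \<phi>"
    using young_function_imp_density[OF assms(1)] .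
  define c where "c = (a + b) / 2"
  have "a < c" "c < b"
    using assms(3) by (simp_all add: c_def)
  then have "0 < (b - c) * \<phi> c"
    using young_density_pos[OF \<phi>, of c] assms(2) by simp
  then have "\<Phi> c < \<Phi> b"
    using young_density_increment_lower[OF \<phi>, of c b] \<open>a < c\<close> \<open>c < b\<close> assms(2) by simp
  then show ?thesis
    using young_function_mono[OF assms(1,2), of c] \<open>a < c\<close> by simp
qed

lemma young_function_le_iff:
  assumes "young_function \<Phi>" "0 \<le> a" "0 \<le> b"
  shows "\<Phi> a \<le> \<Phi> b \<longleftrightarrow> a \<le> b"
  using young_function_mono young_function_strict_mono assms by (meson not_le)

lemma young_function_nonneg:
  assumes "young_function \<Phi>" "0 \<le> t"
  shows "0 \<le> \<Phi> t"
  using young_function_mono[OF assms(1) order_refl assms(2)] young_function_zero[OF assms(1)] by simp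

lemma young_function_superlinear:
  assumes "young_function \<Phi>" "1 \<le> K" "0 \<le> t"
  shows "K * \<Phi> t \<le> \<Phi> (K * t)"
proof -
  obtain \<phi> where \<phi>: "young_density \<Phi> \<phi>"
    using young_function_imp_density[OF assms(1)] .
  have "t \<le> K * t"
    using assms mult_right_mono[of 1 K t] by simp
  then have "(K * t - t) * \<phi> t \<le> \<Phi> (K * t) - \<Phi> t"
    using young_density_increment_lower[OF \<phi> assms(3)] by blast
  then have "(K - 1) * (t * \<phi> t) \<le> \<Phi> (K * t) - \<Phi> t"
    by (simp add: algebra_simps)
  moreover have "(K - 1) * \<Phi> t \<le> (K - 1) * (t * \<phi> t)"
    using young_density_le_mult[OF \<phi> assms(3)] assms(2) by (intro mult_left_mono) auto
  ultimately show ?thesis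
    by (simp add: algebra_simps)
qed

lemma young_function_surj:
  assumes "young_function \<Phi>" "0 \<le> y"
  shows "y \<in> \<Phi> ` {0..}"
proof -
  obtain \<phi> where \<phi>: "young_density \<Phi> \<phi>"
    using young_function_imp_density[OF assms(1)] .
  define M where "M = 1 + y / \<phi> 1"
  have "\<phi> 1 > 0"
    using young_density_pos[OF \<phi>] by simp
  then have "y = (M - 1) * \<phi> 1" and "1 \<le> M"
    using assms(2) by (simp_all add: M_def)
  then have "y \<le> \<Phi> M"
    using young_density_increment_lower[OF \<phi>, of 1 M] young_function_nonneg[OF assms(1), of 1]
    by simp
  then obtain x where "0 \<le> x" "x \<le> M" "\<Phi> x = y"
    using IVT'[of \<Phi> 0 y M] young_density_continuous_on[OF \<phi>] young_density_zero[OF \<phi>]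
      assms(2) \<open>1 \<le> M\<close> by auto
  then show ?thesis
    by auto
qed

lemma young_function_inj_on:
  assumes "young_function \<Phi>"
  shows "inj_on \<Phi> {0..}"
  by (rule linorder_inj_onI) (use young_function_strict_mono[OF assms] in fastforce)+

lemma young_inv_nonneg:
  assumes "young_function \<Phi>" "0 \<le> y"
  shows "0 \<le> young_inv \<Phi> y"
  using the_inv_into_into[OF young_function_inj_on young_function_surj, of \<Phi> y "{0..}"] assms
  unfolding young_inv_def by auto

lemma young_function_young_inv:
  assumes "young_function \<Phi>" "0 \<le> y"
  shows "\<Phi> (young_inv \<Phi> y) = y"
  using f_the_inv_into_f[OF young_function_inj_on young_function_surj] assms
  unfolding young_inv_def by auto

lemma Delta'_young_inv_mult_le:
  assumes "young_function \<Phi>" "Delta' \<Phi>"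
  obtains C where "C > 0"
    "\<And>s t. 0 \<le> s \<Longrightarrow> 0 \<le> t \<Longrightarrow> young_inv \<Phi> s * young_inv \<Phi> t \<le> C * young_inv \<Phi> (s * t)"
proof -
  obtain C where C: "C > 1" "\<And>a b. 0 \<le> a \<Longrightarrow> 0 \<le> b \<Longrightarrow> \<Phi> (a * b) \<le> C * \<Phi> a * \<Phi> b"
    using assms(2) unfolding Delta'_def by blast
  have mult_le: "young_inv \<Phi> s * young_inv \<Phi> t \<le> C * young_inv \<Phi> (s * t)"
    if "0 \<le> s" "0 \<le> t" for s t
  proof -
    define a b w where "a = young_inv \<Phi> s" and "b = young_inv \<Phi> t" and "w = young_inv \<Phi> (s * t)"
    have nonneg: "0 \<le> a" "0 \<le> b" "0 \<le> w"
      using young_inv_nonneg[OF assms(1)] that unfolding a_def b_def w_def by simp_all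
    have "\<Phi> (a * b) \<le> C * \<Phi> a * \<Phi> b"
      using C(2) nonneg by simp
    also have "\<dots> = C * \<Phi> w"
      using young_function_young_inv[OF assms(1)] that unfolding a_def b_def w_def by simp
    also have "\<dots> \<le> \<Phi> (C * w)"
      using young_function_superlinear[OF assms(1)] C(1) nonneg by simp
    finally show ?thesis
      using young_function_le_iff[OF assms(1)] C(1) nonneg unfolding a_def b_def w_def by simp
  qed
  show ?thesis
    using C(1) mult_le by (intro that) auto
qed

lemma young_inequality:
  assumes "young_conj_finite \<Psi>" "0 < s" "0 \<le> t"
  shows "s * t \<le> \<Psi> s + young_conj \<Psi> t"
proof -
  have "s * t - \<Psi> s \<le> Sup {s * t - \<Psi> s | s. s > 0}"
    using assms unfolding young_conj_finite_def by (intro cSup_upper) auto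
  then show ?thesis
    unfolding young_conj_def by simp
qed

lemma young_conj_density_le:
  assumes "young_function \<Psi>" "young_density \<Psi> \<psi>" "0 \<le> a"
  shows "young_conj \<Psi> (\<psi> a) \<le> a * \<psi> a"
  unfolding young_conj_def
proof (rule cSup_least)
  have "1 * \<psi> a - \<Psi> 1 \<in> {s * \<psi> a - \<Psi> s | s. s > 0}"
    by (intro CollectI exI[of _ 1]) simp
  then show "{s * \<psi> a - \<Psi> s | s. s > 0} \<noteq> {}"
    by blast
  fix x assume "x \<in> {s * \<psi> a - \<Psi> s | s. s > 0}"
  then obtain s where s: "s > 0" "x = s * \<psi> a - \<Psi> s"
    by blast
  show "x \<le> a * \<psi> a"
  proof (cases "s \<le> a")
    case True
    then have "s * \<psi> a \<le> a * \<psi> a"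
      using young_density_nonneg[OF assms(2,3)] by (intro mult_right_mono)
    then show ?thesis
      using s young_function_nonneg[OF assms(1), of s] by simp
  next
    case False
    then have "(s - a) * \<psi> a \<le> \<Psi> s - \<Psi> a"
      using young_density_increment_lower[OF assms(2,3)] by simp
    then show ?thesis
      using s young_function_nonneg[OF assms(1,3)] by (simp add: algebra_simps)
  qed
qed

lemma young_conj_density_nonneg:
  assumes "young_conj_finite \<Psi>" "young_density \<Psi> \<psi>" "0 < a"
  shows "0 \<le> young_conj \<Psi> (\<psi> a)"
proof -
  have "(a / 2) * \<psi> a \<le> \<Psi> (a / 2) + young_conj \<Psi> (\<psi> a)"
    using young_inequality[OF assms(1), of "a / 2" "\<psi> a"] young_density_nonneg[OF assms(2)] assms(3)
    by simp
  moreover have "\<Psi> (a / 2) \<le> (a / 2) * \<psi> (a / 2)"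
    using young_density_le_mult[OF assms(2), of "a / 2"] assms(3) by simp
  moreover have "(a / 2) * \<psi> (a / 2) \<le> (a / 2) * \<psi> a"
    using young_density_mono[OF assms(2), of "a / 2" a] assms(3) by (intro mult_left_mono) auto
  ultimately show ?thesis
    by simp
qed

lemma Delta'_young_conj_imp_Nabla':
  assumes "young_function \<Psi>" "young_conj_finite \<Psi>" "Delta' (young_conj \<Psi>)"
  shows "Nabla' \<Psi>"
proof -
  obtain \<psi> where \<psi>: "young_density \<Psi> \<psi>"
    using young_function_imp_density[OF assms(1)] .
  obtain C where C: "C > 1" "\<And>u v. 0 \<le> u \<Longrightarrow> 0 \<le> v \<Longrightarrow>
      young_conj \<Psi> (u * v) \<le> C * young_conj \<Psi> u * young_conj \<Psi> v"
    using assms(3) unfolding Delta'_def by blast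
  have "\<Psi> a * \<Psi> b \<le> \<Psi> ((C + 1) * a * b)" if "0 \<le> a" "0 \<le> b" for a b
  proof (cases "a = 0 \<or> b = 0")
    case True
    then show ?thesis
      using young_function_zero[OF assms(1)] by auto
  next
    case False
    then have "0 < a" "0 < b"
      using that by auto
    define u v where "u = \<psi> a" and "v = \<psi> b"
    have uv: "0 \<le> u" "0 \<le> v"
      using young_density_nonneg[OF \<psi>] that unfolding u_def v_def by simp_all
    have conj_u: "young_conj \<Psi> u \<le> a * u" and conj_v: "young_conj \<Psi> v \<le> b * v"
      using young_conj_density_le[OF assms(1) \<psi>] that unfolding u_def v_def by simp_all
    have "0 \<le> young_conj \<Psi> v"
      using young_conj_density_nonneg[OF assms(2) \<psi> \<open>0 < b\<close>] unfolding v_def .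
    then have conj_uv: "young_conj \<Psi> u * young_conj \<Psi> v \<le> (a * u) * (b * v)"
      using mult_mono[OF conj_u conj_v] that uv by simp
    have "young_conj \<Psi> (u * v) \<le> C * (young_conj \<Psi> u * young_conj \<Psi> v)"
      using C(2)[OF uv] by (simp add: mult.assoc)
    also have "\<dots> \<le> C * (a * b * (u * v))"
      using conj_uv C(1) by (intro mult_left_mono) (simp_all add: mult_ac)
    finally have "young_conj \<Psi> (u * v) \<le> C * (a * b * (u * v))" .
    moreover have "(C + 1) * a * b * (u * v) \<le> \<Psi> ((C + 1) * a * b) + young_conj \<Psi> (u * v)"
      using young_inequality[OF assms(2), of "(C + 1) * a * b" "u * v"] C(1) \<open>0 < a\<close> \<open>0 < b\<close> uv
      by simp
    moreover have "(C + 1) * a * b * (u * v) = C * (a * b * (u * v)) + a * b * (u * v)"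
      by (simp add: algebra_simps)
    ultimately have "a * b * (u * v) \<le> \<Psi> ((C + 1) * a * b)"
      by linarith
    moreover have "\<Psi> a * \<Psi> b \<le> (a * u) * (b * v)"
      using mult_mono[OF young_density_le_mult[OF \<psi>] young_density_le_mult[OF \<psi>]]
        young_function_nonneg[OF assms(1)] that uv unfolding u_def v_def by simp
    ultimately show ?thesis
      by (simp add: mult_ac)
  qed
  then show ?thesis
    unfolding Nabla'_def using C(1) by (intro exI[of _ "C + 1"]) auto
qed

lemma Delta2_scale_le:
  assumes "young_function \<Psi>" "Delta2 \<Psi>" "0 \<le> L"
  obtains B where "B > 0" "\<And>y. 0 \<le> y \<Longrightarrow> \<Psi> (L * y) \<le> B * \<Psi> y"
proof -
  obtain C where C: "\<And>t. 0 \<le> t \<Longrightarrow> \<Psi> (2 * t) \<le> C * \<Psi> t"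
    using assms(2) unfolding Delta2_def by blast
  define D where "D = max C 1"
  have pow: "\<Psi> (2 ^ n * y) \<le> D ^ n * \<Psi> y" if "0 \<le> y" for n y
  proof (induction n)
    case 0
    then show ?case by simp
  next
    case (Suc n)
    have "\<Psi> (2 ^ Suc n * y) \<le> C * \<Psi> (2 ^ n * y)"
      using C[of "2 ^ n * y"] that by (simp add: mult.assoc)
    also have "\<dots> \<le> D * \<Psi> (2 ^ n * y)"
      using young_function_nonneg[OF assms(1)] that unfolding D_def
      by (intro mult_right_mono) auto
    also have "\<dots> \<le> D * (D ^ n * \<Psi> y)"
      using Suc unfolding D_def by (intro mult_left_mono) auto
    finally show ?case
      by (simp add: mult.assoc)
  qed
  obtain n where n: "L < 2 ^ n"
    using real_arch_pow[of 2 L] by auto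
  have "\<Psi> (L * y) \<le> D ^ n * \<Psi> y" if "0 \<le> y" for y
  proof -
    have "L * y \<le> 2 ^ n * y"
      using n that by (intro mult_right_mono) auto
    then have "\<Psi> (L * y) \<le> \<Psi> (2 ^ n * y)"
      using young_function_mono[OF assms(1)] assms(3) that by simp
    then show ?thesis
      using pow[OF that, of n] by simp
  qed
  moreover have "D ^ n > 0"
    unfolding D_def by simp
  ultimately show ?thesis
    using that by blast
qed

theorem lemma3p6:
  fixes \<Phi> \<Psi> :: "real \<Rightarrow> real"
  assumes "young_function \<Phi>" and "young_function \<Psi>"
    and "Delta2 \<Phi>" and "Delta2 \<Psi>"
    and "Delta' \<Phi>"
    and "young_conj_finite \<Psi>" and "Delta' (young_conj \<Psi>)"
  shows "\<exists>C>0. \<forall>s\<ge>0. \<forall>t\<ge>0.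
           \<Psi> (young_inv \<Phi> s) * \<Psi> (young_inv \<Phi> t) \<le> C * \<Psi> (young_inv \<Phi> (s * t))"
proof -
  obtain C where C: "C > 0"
    "\<And>s t. 0 \<le> s \<Longrightarrow> 0 \<le> t \<Longrightarrow> young_inv \<Phi> s * young_inv \<Phi> t \<le> C * young_inv \<Phi> (s * t)"
    using Delta'_young_inv_mult_le[OF assms(1,5)] by blast
  obtain K where K: "K > 0" "\<And>a b. 0 \<le> a \<Longrightarrow> 0 \<le> b \<Longrightarrow> \<Psi> a * \<Psi> b \<le> \<Psi> (K * a * b)"
    using Delta'_young_conj_imp_Nabla'[OF assms(2,6,7)] unfolding Nabla'_def by blast
  obtain B where B: "B > 0" "\<And>y. 0 \<le> y \<Longrightarrow> \<Psi> (K * C * y) \<le> B * \<Psi> y"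
    using Delta2_scale_le[OF assms(2,4), of "K * C"] K(1) C(1) by auto
  have "\<Psi> (young_inv \<Phi> s) * \<Psi> (young_inv \<Phi> t) \<le> B * \<Psi> (young_inv \<Phi> (s * t))"
    if "0 \<le> s" "0 \<le> t" for s t
  proof -
    have "\<Psi> (young_inv \<Phi> s) * \<Psi> (young_inv \<Phi> t) \<le> \<Psi> (K * (young_inv \<Phi> s * young_inv \<Phi> t))"
      using K(2) young_inv_nonneg[OF assms(1)] that by (simp add: mult.assoc)
    also have "\<dots> \<le> \<Psi> (K * C * young_inv \<Phi> (s * t))"
      using C(2)[OF that] K(1) young_inv_nonneg[OF assms(1)] that
      by (intro young_function_mono[OF assms(2)]) (simp_all add: mult.assoc)
    also have "\<dots> \<le> B * \<Psi> (young_inv \<Phi> (s * t))"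
      using B(2) young_inv_nonneg[OF assms(1)] that by simp
    finally show ?thesis .
  qed
  with B(1) show ?thesis
    by blast
qed

end
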